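(* Let $K$ be a non-Archimedean local field with normalized absolute value $|\cdot|_K$, let $q$ be the cardinality of its residue field, and let $\alpha>0$. Put $d_\alpha=\dfrac{1-q^\alpha}{1-q^{-\alpha-1}}$. Let $u$ be a complex-valued function defined on the set of values $\{q^k: k\in\mathbb Z\}$ of $|\cdot|_K$ on $K\setminus\{0\}$, and suppose that for some $m\in\mathbb Z$ $$\sum_{k=-\infty}^m q^k|u(q^k)|<\infty,\qquad \sum_{l=m}^\infty q^{-\alpha l}|u(q^l)|<\infty .$$ Then for each $n\in\mathbb Z$ and each $x\in K$ with $|x|_K=q^n$, the integral $$(D^\alpha u)(x)=d_\alpha\int_K |y|_K^{-\alpha-1}\big[u(|x-y|_K)-u(|x|_K)\big]\,dy$$ exists, depends only on $|x|_K$, and $$(D^\alpha u)(q^n)=d_\alpha\Big(1-\frac1q\Big)q^{-(\alpha+1)n}\sum_{k=-\infty}^{n-1}q^k u(q^k)+q^{-\alpha n-1}\frac{q^\alpha+q-2}{1-q^{-\alpha-1}}\,u(q^n)+d_\alpha\Big(1-\frac1q\Big)\sum_{l=n+1}^\infty q^{-\alpha l}u(q^l).$$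
   Context: $K$ is a non-discrete totally disconnected locally compact field. Its absolute value is normalized: if $\beta$ generates the maximal ideal $P=\{|x|_K<1\}$ of $O=\{|x|_K\le 1\}$ and $q=|O/P|$, then $|\beta|_K=q^{-1}$, so $|\cdot|_K$ takes the values $q^N$, $N\in\mathbb Z$, on $K\setminus\{0\}$. $dx$ denotes the additive Haar measure on $K$ normalized so that $O$ has measure $1$. A function $x\mapsto u(|x|_K)$ is called radial. *)

theory Defs
  imports "HOL-Analysis.Analysis" "HOL-Probability.Probability"
begin

text \<open>A non-Archimedean local field K (non-discrete, totally disconnected, locally compact)
  is modelled as a field type 'a carrying a non-Archimedean absolute value av
  which is discrete, normalized (values q^N, N integer, with some beta of value 1/q,
  q the cardinality of the residue field O/P), non-trivial, with finite residue
  field and complete.\<close>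

definition int_ring :: "('a::field \<Rightarrow> real) \<Rightarrow> 'a set" where
  "int_ring av = {x. av x \<le> 1}"

definition residue_classes :: "('a::field \<Rightarrow> real) \<Rightarrow> 'a set set" where
  "residue_classes av = (\<lambda>x. {y \<in> int_ring av. av (x - y) < 1}) ` int_ring av"

definition av_complete :: "('a::field \<Rightarrow> real) \<Rightarrow> bool" where
  "av_complete av \<longleftrightarrow>
     (\<forall>s::nat \<Rightarrow> 'a. (\<forall>e>0. \<exists>N. \<forall>m\<ge>N. \<forall>n\<ge>N. av (s m - s n) < e) \<longrightarrow>
        (\<exists>L. \<forall>e>0. \<exists>N. \<forall>n\<ge>N. av (s n - L) < e))"

definition nonarch_local_field :: "('a::field \<Rightarrow> real) \<Rightarrow> nat \<Rightarrow> bool" where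
  "nonarch_local_field av q \<longleftrightarrow>
     (\<forall>x. 0 \<le> av x) \<and> (\<forall>x. av x = 0 \<longleftrightarrow> x = 0) \<and>
     (\<forall>x y. av (x * y) = av x * av y) \<and>
     (\<forall>x y. av (x + y) \<le> max (av x) (av y)) \<and>
     2 \<le> q \<and> finite (residue_classes av) \<and> card (residue_classes av) = q \<and>
     (\<forall>x. x \<noteq> 0 \<longrightarrow> (\<exists>N::int. av x = real q powi N)) \<and>
     (\<exists>\<beta>. av \<beta> = 1 / real q) \<and>
     av_complete av"

definition closed_balls :: "('a::field \<Rightarrow> real) \<Rightarrow> 'a set set" where
  "closed_balls av = {{y. av (y - a) \<le> r} | a r. True}"

definition haar_measure :: "('a::field \<Rightarrow> real) \<Rightarrow> 'a measure \<Rightarrow> bool" where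
  "haar_measure av M \<longleftrightarrow>
     space M = UNIV \<and> sets M = sigma_sets UNIV (closed_balls av) \<and>
     (\<forall>A\<in>sets M. \<forall>a. emeasure M ((\<lambda>x. a + x) ` A) = emeasure M A) \<and>
     emeasure M (int_ring av) = 1"

end

theory Submission
  imports Defs "HOL-Library.Nat_Bijection"
begin

text \<open>
  Let \<open>|x| = q^n\<close>. Every \<open>y \<noteq> x\<close> lies on exactly one sphere
  \<open>S_j = {y. |x - y| = q^j}\<close> around \<open>x\<close>, and by the ultrametric inequality the
  integrand is constant on each of them: for \<open>j < n\<close> one has \<open>|y| = q^n\<close>, for
  \<open>j > n\<close> one has \<open>|y| = q^j\<close>, and on \<open>S_n\<close> the integrand vanishes because
  \<open>|x - y| = |x|\<close>. A ball of radius \<open>q^k\<close> is the disjoint union of \<open>q\<close> translates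
  of a ball of radius \<open>q^(k-1)\<close> (the residue classes of \<open>O\<close>, rescaled), so translation
  invariance and \<open>\<mu>(O) = 1\<close> give \<open>\<mu>(S_j) = q^j (1 - 1/q)\<close>. The integral is therefore
  a series over the spheres; the terms involving \<open>u(q^n)\<close> form two geometric series whose
  sum, multiplied by \<open>d_\<alpha>\<close>, is the middle coefficient of the formula.
\<close>

lemma power_int_less_iff_exp:
  fixes a :: "'a::linordered_field"
  assumes "1 < a"
  shows "a powi m < a powi n \<longleftrightarrow> m < n"
  using assms power_int_strict_increasing[of m n a] power_int_increasing[of n m a]
  by (cases "m < n") auto

lemma power_int_le_iff_exp:
  fixes a :: "'a::linordered_field"
  assumes "1 < a"
  shows "a powi m \<le> a powi n \<longleftrightarrow> m \<le> n"
  using power_int_less_iff_exp[OF assms, of n m] by linarith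

lemma has_sum_power_int_atLeast:
  fixes t :: real
  assumes "0 < t" "t < 1"
  shows "((\<lambda>j::int. t powi j) has_sum (t powi a / (1 - t))) {a..}"
proof -
  have "(\<lambda>i. t powi a * t ^ i) sums (t powi a * (1 / (1 - t)))"
    using assms by (intro sums_mult geometric_sums) simp
  then have "((\<lambda>i. t powi a * t ^ i) has_sum (t powi a / (1 - t))) UNIV"
    using assms by (intro sums_nonneg_imp_has_sum_strong) (simp_all add: always_eventually)
  also have "?this \<longleftrightarrow> ?thesis"
  proof (intro has_sum_reindex_bij_witness[of UNIV "\<lambda>j. nat (j - a)" "\<lambda>i. a + int i"])
    fix i :: nat
    show "t powi (a + int i) = t powi a * t ^ i"
      using assms by (simp add: power_int_add)
  qed auto
  finally show ?thesis .
qed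

lemma has_sum_power_int_atMost:
  fixes t :: real
  assumes "1 < t"
  shows "((\<lambda>j::int. t powi j) has_sum (t powi n / (t - 1))) {..n - 1}"
proof -
  have "((\<lambda>j::int. (1 / t) powi j) has_sum ((1 / t) powi (1 - n) / (1 - 1 / t))) {1 - n..}"
    using assms by (intro has_sum_power_int_atLeast) simp_all
  also have "(1 / t) powi (1 - n) / (1 - 1 / t) = t powi n / (t - 1)"
    using assms by (simp add: power_int_one_over power_int_diff field_simps)
  also have "((\<lambda>j. (1 / t) powi j) has_sum t powi n / (t - 1)) {1 - n..} \<longleftrightarrow> ?thesis"
    by (intro has_sum_reindex_bij_witness[of "{1 - n..}" uminus uminus])
       (auto simp: power_int_one_over power_int_minus inverse_eq_divide)
  finally show ?thesis .
qed

lemma has_sum_powr_atLeast: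
  fixes t \<alpha> :: real
  assumes "1 < t" "0 < \<alpha>"
  shows "((\<lambda>j::int. t powr (- \<alpha> * j)) has_sum (t powr (- \<alpha> * a) / (1 - t powr (- \<alpha>)))) {a..}"
proof -
  have "t powr (- \<alpha> * j) = (t powr (- \<alpha>)) powi j" for j :: int
    using assms by (simp add: powr_real_of_int'[symmetric] powr_powr)
  moreover have "((\<lambda>j::int. (t powr (- \<alpha>)) powi j) has_sum ((t powr (- \<alpha>)) powi a / (1 - t powr (- \<alpha>)))) {a..}"
    using assms by (intro has_sum_power_int_atLeast) (simp_all add: powr_less_one)
  ultimately show ?thesis
    by simp
qed

lemma summable_on_atMost_int_shift:
  fixes f :: "int \<Rightarrow> 'b::banach"
  assumes "f summable_on {..m}"
  shows "f summable_on {..n}"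
proof -
  have "f summable_on ({..m} \<union> {m<..n})"
    using assms by (intro summable_on_Un_disjoint) auto
  then show ?thesis by (rule summable_on_subset_banach) auto
qed

lemma summable_on_atLeast_int_shift:
  fixes f :: "int \<Rightarrow> 'b::banach"
  assumes "f summable_on {m..}"
  shows "f summable_on {n..}"
proof -
  have "f summable_on ({m..} \<union> {n..<m})"
    using assms by (intro summable_on_Un_disjoint) auto
  then show ?thesis by (rule summable_on_subset_banach) auto
qed

lemma has_sum_weighted_difference:
  fixes b :: "'i \<Rightarrow> real" and v w :: "'i \<Rightarrow> complex"
  assumes summable: "(\<lambda>j. b j * norm (v j)) summable_on A"
    and weights: "(b has_sum s) A"
    and nonneg: "\<And>j. j \<in> A \<Longrightarrow> 0 \<le> b j" "0 \<le> K"
    and w: "\<And>j. j \<in> A \<Longrightarrow> w j = of_real K * (of_real (b j) * (v j - z))"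
  shows "(w has_sum of_real K * ((\<Sum>\<^sub>\<infinity>j\<in>A. of_real (b j) * v j) - of_real s * z)) A"
    and "(\<lambda>j. norm (w j)) summable_on A"
proof -
  have "(\<lambda>j. norm (of_real (b j) * v j)) summable_on A"
    by (rule summable_on_cong[THEN iffD2, OF _ summable]) (simp add: norm_mult nonneg)
  then have main: "((\<lambda>j. of_real (b j) * v j) has_sum (\<Sum>\<^sub>\<infinity>j\<in>A. of_real (b j) * v j)) A"
    by (rule has_sum_infsum[OF abs_summable_summable])
  have const: "((\<lambda>j. of_real (b j) * z) has_sum (of_real s * z)) A"
    by (rule has_sum_cmult_left[OF has_sum_of_real[OF weights]])
  have "((\<lambda>j. of_real (b j) * (v j - z)) has_sum ((\<Sum>\<^sub>\<infinity>j\<in>A. of_real (b j) * v j) - of_real s * z)) A"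
    using has_sum_add[OF main has_sum_uminusI[OF const]]
    by (simp only: right_diff_distrib diff_conv_add_uminus[symmetric])
  then show "(w has_sum of_real K * ((\<Sum>\<^sub>\<infinity>j\<in>A. of_real (b j) * v j) - of_real s * z)) A"
    by (subst has_sum_cong[where g = "\<lambda>j. of_real K * (of_real (b j) * (v j - z))"])
       (simp_all add: w has_sum_cmult_right)
  have "(\<lambda>j. K * (b j * norm (v j) + norm z * b j)) summable_on A"
    by (intro summable_on_cmult_right summable_on_add[OF summable]
        summable_on_cmult_right[OF has_sum_imp_summable[OF weights]])
  then show "(\<lambda>j. norm (w j)) summable_on A"
  proof (rule summable_on_comparison_test)
    fix j assume j: "j \<in> A"
    have "norm (w j) = K * (b j * norm (v j - z))"
      using j nonneg by (simp add: w norm_mult)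
    also have "\<dots> \<le> K * (b j * (norm (v j) + norm z))"
      using nonneg j by (intro mult_left_mono norm_triangle_ineq4) simp_all
    also have "\<dots> = K * (b j * norm (v j) + norm z * b j)"
      by (simp add: distrib_left mult.commute)
    finally show "norm (w j) \<le> K * (b j * norm (v j) + norm z * b j)" .
  qed simp
qed

lemma integrable_has_sum_integral_piecewise_constant:
  fixes A :: "int \<Rightarrow> 'a set" and c :: "int \<Rightarrow> 'b::{banach, second_countable_topology}"
  assumes sets: "\<And>j. A j \<in> sets M"
    and finite: "\<And>j. emeasure M (A j) < \<infinity>"
    and disjoint: "\<And>i j y. y \<in> A i \<Longrightarrow> y \<in> A j \<Longrightarrow> i = j"
    and on_pieces: "\<And>j y. y \<in> A j \<Longrightarrow> f y = c j"
    and off_pieces: "\<And>y. (\<And>j. y \<notin> A j) \<Longrightarrow> f y = 0"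
    and summable: "(\<lambda>j. norm (measure M (A j) *\<^sub>R c j)) summable_on UNIV"
  shows "integrable M f" and "((\<lambda>j. measure M (A j) *\<^sub>R c j) has_sum integral\<^sup>L M f) UNIV"
proof -
  define w where "w j = measure M (A j) *\<^sub>R c j" for j
  define g where "g i y = indicator (A (int_decode i)) y *\<^sub>R c (int_decode i)" for i y
  have bij: "bij int_decode" by (rule bij_int_decode)
  have g_on_piece: "g i y = (if i = int_encode j then c j else 0)" if y: "y \<in> A j" for i j y
  proof (cases "i = int_encode j")
    case False
    then have "y \<notin> A (int_decode i)"
      using disjoint[OF _ y] by (metis int_decode_inverse)
    then show ?thesis using False by (simp add: g_def)
  qed (simp add: g_def y)
  have g_off_pieces: "g i y = 0" if "\<And>j. y \<notin> A j" for i y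
    using that by (simp add: g_def)
  have series: "(\<lambda>i. g i y) sums f y \<and> summable (\<lambda>i. norm (g i y))" for y
  proof (cases "\<exists>j. y \<in> A j")
    case True
    then obtain j where y: "y \<in> A j" by blast
    have "(\<lambda>i. g i y) = (\<lambda>i. if i = int_encode j then c j else 0)"
      "(\<lambda>i. norm (g i y)) = (\<lambda>i. if i = int_encode j then norm (c j) else 0)"
      using g_on_piece[OF y] by (simp_all add: fun_eq_iff if_distrib)
    then show ?thesis
      using sums_single[of "int_encode j" "\<lambda>_. c j"] sums_single[of "int_encode j" "\<lambda>_. norm (c j)"]
      by (simp add: on_pieces[OF y] sums_iff)
  qed (simp add: g_off_pieces off_pieces)
  have g_integrable: "integrable M (g i)" for i
    unfolding g_def using sets finite by (simp add: integrable_indicator_iff)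
  have integral_g: "integral\<^sup>L M (g i) = w (int_decode i)" for i
    unfolding g_def w_def using sets.sets_into_space[OF sets] sets finite
    by (simp add: integrable_indicator_iff Int_absorb2)
  have integral_norm_g: "(\<integral>y. norm (g i y) \<partial>M) = norm (w (int_decode i))" for i
    unfolding g_def w_def using sets.sets_into_space[OF sets] sets finite
    by (simp add: integrable_indicator_iff Int_absorb2)
  have "(\<lambda>i. norm (w (int_decode i))) summable_on UNIV"
    using summable summable_on_reindex_bij_betw[of int_decode UNIV UNIV "\<lambda>j. norm (w j)"] bij
    by (simp add: bij_betw_def w_def)
  then have summable_integrals: "summable (\<lambda>i. \<integral>y. norm (g i y) \<partial>M)"
    by (simp add: integral_norm_g summable_on_UNIV_nonneg_real_iff)
  have f_eq: "f = (\<lambda>y. \<Sum>i. g i y)"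
    using series by (simp add: fun_eq_iff sums_iff)
  show "integrable M f"
    unfolding f_eq by (rule integrable_suminf[OF g_integrable _ summable_integrals]) (simp add: series)
  have "(\<lambda>i. w (int_decode i)) sums integral\<^sup>L M f"
    using sums_integral[OF g_integrable _ summable_integrals] series
    by (simp add: f_eq[symmetric] integral_g)
  then have "((\<lambda>i. w (int_decode i)) has_sum integral\<^sup>L M f) UNIV"
    using summable_integrals by (intro norm_summable_imp_has_sum) (simp_all add: integral_norm_g)
  then show "(w has_sum integral\<^sup>L M f) UNIV"
    using has_sum_reindex_bij_betw[of int_decode UNIV UNIV w] bij by (simp add: bij_betw_def)
qed

text \<open>The measure of the sphere \<open>{y. |x - y| = Q^j}\<close> around a point \<open>x\<close> with \<open>|x| = Q^n\<close>
  times the value of the integrand on that sphere.\<close>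

definition radial_term :: "real \<Rightarrow> real \<Rightarrow> (real \<Rightarrow> complex) \<Rightarrow> int \<Rightarrow> int \<Rightarrow> complex" where
  "radial_term Q \<alpha> u n j =
    (if j < n then of_real ((1 - 1 / Q) * Q powr (- (\<alpha> + 1) * n)) * (of_real (Q powi j) * (u (Q powi j) - u (Q powi n)))
     else if n < j then of_real (1 - 1 / Q) * (of_real (Q powr (- \<alpha> * j)) * (u (Q powi j) - u (Q powi n)))
     else 0)"

lemma has_sum_radial_term:
  fixes Q \<alpha> :: real and u :: "real \<Rightarrow> complex" and n :: int
  assumes Q: "1 < Q" and \<alpha>: "0 < \<alpha>"
    and below: "(\<lambda>k. Q powi k * norm (u (Q powi k))) summable_on {..n - 1}"
    and above: "(\<lambda>l. Q powr (- \<alpha> * l) * norm (u (Q powi l))) summable_on {n + 1..}"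
  shows "(radial_term Q \<alpha> u n has_sum
      of_real ((1 - 1 / Q) * Q powr (- (\<alpha> + 1) * n)) *
        ((\<Sum>\<^sub>\<infinity>k\<in>{..n - 1}. of_real (Q powi k) * u (Q powi k)) - of_real (Q powi n / (Q - 1)) * u (Q powi n))
      + of_real (1 - 1 / Q) *
        ((\<Sum>\<^sub>\<infinity>l\<in>{n + 1..}. of_real (Q powr (- \<alpha> * l)) * u (Q powi l))
          - of_real (Q powr (- \<alpha> * (n + 1)) / (1 - Q powr (- \<alpha>))) * u (Q powi n))) UNIV"
    (is "(?w has_sum ?lower + ?upper) UNIV")
    and "(\<lambda>j. norm (radial_term Q \<alpha> u n j)) summable_on UNIV"
proof -
  have weight_nonneg: "0 \<le> 1 - 1 / Q"
    using Q by simp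
  have lower_weight_nonneg: "0 \<le> (1 - 1 / Q) * Q powr (- (\<alpha> + 1) * n)"
    using weight_nonneg by simp
  have lower_terms: "radial_term Q \<alpha> u n j = of_real ((1 - 1 / Q) * Q powr (- (\<alpha> + 1) * n)) *
      (of_real (Q powi j) * (u (Q powi j) - u (Q powi n)))" if "j \<in> {..n - 1}" for j
    using that by (simp add: radial_term_def)
  have lower_nonneg: "0 \<le> Q powi j" for j :: int
    using Q by simp
  note lower = has_sum_weighted_difference[OF below has_sum_power_int_atMost[OF Q] lower_nonneg
      lower_weight_nonneg lower_terms]
  have upper_terms: "radial_term Q \<alpha> u n j
      = of_real (1 - 1 / Q) * (of_real (Q powr (- \<alpha> * j)) * (u (Q powi j) - u (Q powi n)))"
    if "j \<in> {n + 1..}" for j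
    using that by (simp add: radial_term_def)
  note upper = has_sum_weighted_difference[OF above has_sum_powr_atLeast[OF Q \<alpha>] powr_ge_zero
      weight_nonneg upper_terms]
  have center: "(?w has_sum 0) {n}" "(\<lambda>j. norm (?w j)) summable_on {n}"
    using has_sum_finite[of "{n}" ?w] by (simp_all add: radial_term_def)
  have UNIV_split: "UNIV = {..n - 1} \<union> {n} \<union> {n + 1..}" and disjoint_parts:
    "{..n - 1} \<inter> {n} = {}" "({..n - 1} \<union> {n}) \<inter> {n + 1..} = {}"
    by auto
  have "(?w has_sum ?lower + 0 + ?upper) UNIV"
    unfolding UNIV_split
    by (intro has_sum_Un_disjoint lower(1) upper(1) center disjoint_parts)
  then show "(?w has_sum ?lower + ?upper) UNIV"
    by simp
  show "(\<lambda>j. norm (?w j)) summable_on UNIV"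
    unfolding UNIV_split
    by (intro summable_on_Un_disjoint lower(2) upper(2) center disjoint_parts)
qed

locale nonarch_valued_field =
  fixes av :: "'a::field \<Rightarrow> real" and q :: nat
  assumes local_field: "nonarch_local_field av q"
begin

abbreviation Q :: real where "Q \<equiv> real q"

lemma av_nonneg: "0 \<le> av x"
  and av_eq_0_iff [simp]: "av x = 0 \<longleftrightarrow> x = 0"
  and av_mult: "av (x * y) = av x * av y"
  and av_add_le_max: "av (x + y) \<le> max (av x) (av y)"
  and q_ge_2: "2 \<le> q"
  and finite_residue_classes: "finite (residue_classes av)"
  and card_residue_classes: "card (residue_classes av) = q"
  and av_power_int_value: "x \<noteq> 0 \<Longrightarrow> \<exists>N. av x = Q powi N"
  and exists_av_eq_inverse: "\<exists>\<beta>. av \<beta> = 1 / Q"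
  using local_field unfolding nonarch_local_field_def by auto

lemma Q_gt_1: "1 < Q"
  using q_ge_2 by simp

lemma Q_power_int_less_iff [simp]: "Q powi m < Q powi n \<longleftrightarrow> m < n"
  by (rule power_int_less_iff_exp[OF Q_gt_1])

lemma Q_power_int_le_iff [simp]: "Q powi m \<le> Q powi n \<longleftrightarrow> m \<le> n"
  by (rule power_int_le_iff_exp[OF Q_gt_1])

lemma Q_power_int_eq_iff [simp]: "Q powi m = Q powi n \<longleftrightarrow> m = n"
  by (metis Q_power_int_le_iff order_antisym order_refl)

lemma Q_power_int_pos [simp]: "0 < Q powi k"
  using Q_gt_1 by simp

lemma av_0 [simp]: "av 0 = 0"
  by simp

lemma av_1 [simp]: "av 1 = 1"
  using av_mult[of 1 1] by simp

lemma av_minus [simp]: "av (- x) = av x"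
proof -
  have "av (- 1) * av (- 1) = 1"
    using av_mult[of "- 1" "- 1"] by simp
  then have "(av (- 1) - 1) * (av (- 1) + 1) = 0"
    by (simp add: algebra_simps)
  then have "av (- 1) = 1"
    using av_nonneg[of "- 1"] by simp
  then show ?thesis
    using av_mult[of "- 1" x] by simp
qed

lemma av_minus_commute: "av (x - y) = av (y - x)"
  by (metis av_minus minus_diff_eq)

lemma av_inverse: "av (inverse x) = inverse (av x)"
  by (cases "x = 0") (simp_all add: field_simps flip: av_mult)

lemma av_divide: "av (x / y) = av x / av y"
  by (simp add: divide_inverse av_mult av_inverse)

lemma av_power_int: "av (x powi k) = av x powi k"
proof -
  have "av (x ^ n) = av x ^ n" for n
    by (induction n) (simp_all add: av_mult)
  then show ?thesis
    by (simp add: power_int_def av_inverse power_inverse)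
qed

lemma exists_av_eq: "\<exists>g. av g = Q powi k"
proof -
  obtain \<beta> where "av \<beta> = 1 / Q"
    using exists_av_eq_inverse by blast
  then have "av (\<beta> powi (- k)) = Q powi k"
    by (simp add: av_divide av_power_int power_int_minus_divide power_int_one_over)
  then show ?thesis by blast
qed

lemma av_diff_le_max: "av (x - z) \<le> max (av (x - y)) (av (y - z))"
  using av_add_le_max[of "x - y" "y - z"] by simp

lemma av_add_eq_max:
  assumes "av x \<noteq> av y"
  shows "av (x + y) = max (av x) (av y)"
proof -
  have "av x \<le> max (av (x + y)) (av y)" "av y \<le> max (av (x + y)) (av x)"
    using av_add_le_max[of "x + y" "- y"] av_add_le_max[of "x + y" "- x"] by simp_all
  then show ?thesis
    using av_add_le_max[of x y] assms by linarith
qed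

lemma av_le_prev_power_int:
  assumes "av x < Q powi k"
  shows "av x \<le> Q powi (k - 1)"
proof (cases "x = 0")
  case False
  then obtain N where "av x = Q powi N"
    using av_power_int_value by blast
  then show ?thesis
    using assms by simp
qed simp

definition vball :: "'a \<Rightarrow> int \<Rightarrow> 'a set" where
  "vball a k = {y. av (y - a) \<le> Q powi k}"

definition vsphere :: "'a \<Rightarrow> int \<Rightarrow> 'a set" where
  "vsphere a k = {y. av (y - a) = Q powi k}"

lemma vball_0_0: "vball 0 0 = int_ring av"
  by (simp add: vball_def int_ring_def)

lemma center_mem_vball [simp]: "a \<in> vball a k"
  by (simp add: vball_def less_imp_le)

lemma vsphere_eq_Diff: "vsphere a k = vball a k - vball a (k - 1)"
proof -
  have "av z = Q powi k \<longleftrightarrow> av z \<le> Q powi k \<and> \<not> av z \<le> Q powi (k - 1)" for z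
    using av_le_prev_power_int[of z k] by (auto simp: less_le)
  then show ?thesis
    by (auto simp: vsphere_def vball_def)
qed

lemma vball_mono: "k \<le> l \<Longrightarrow> vball a k \<subseteq> vball a l"
  by (auto simp: vball_def intro: order_trans)

lemma vball_translate: "vball a k = (+) a ` vball 0 k"
  by (auto simp: vball_def image_iff intro!: exI[where x = "_ - a"])

lemma vball_eq_of_mem:
  assumes "w \<in> vball c k"
  shows "vball c k = vball w k"
proof -
  have "av (c - w) \<le> Q powi k" "av (w - c) \<le> Q powi k"
    using assms av_minus_commute[of c w] by (simp_all add: vball_def)
  then show ?thesis
    using av_diff_le_max[of _ c w] av_diff_le_max[of _ w c]
    unfolding vball_def by (intro Collect_cong) (smt (verit))
qed

lemma residue_class_eq_vball:
  assumes "x \<in> int_ring av"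
  shows "{y \<in> int_ring av. av (x - y) < 1} = vball x (- 1)"
proof -
  have Q_inverse: "inverse Q < 1"
    using Q_gt_1 by (simp add: inverse_less_1_iff)
  have "av (x - y) < 1 \<longleftrightarrow> av (y - x) \<le> Q powi (- 1)" for y
    using Q_inverse av_le_prev_power_int[of "x - y" 0] av_minus_commute[of x y]
    by (auto simp: power_int_minus)
  moreover have "av y \<le> 1" if "av (y - x) \<le> Q powi (- 1)" for y
    using that assms av_add_le_max[of "y - x" x] Q_inverse
    by (auto simp: int_ring_def power_int_minus)
  ultimately show ?thesis
    by (auto simp: vball_def int_ring_def)
qed

lemma image_mult_vball:
  assumes g: "av g = Q powi k"
  shows "(*) g ` vball c l = vball (g * c) (l + k)"
proof -
  have "g \<noteq> 0"
    using g Q_power_int_pos[of k] q_ge_2 by auto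
  have "av (g * y - g * c) = Q powi k * av (y - c)" for y
    using av_mult[of g "y - c"] g by (simp add: right_diff_distrib)
  moreover have "Q powi (l + k) = Q powi k * Q powi l"
    using Q_gt_1 by (simp add: power_int_add mult.commute)
  ultimately have "y \<in> vball c l \<longleftrightarrow> g * y \<in> vball (g * c) (l + k)" for y
    by (simp add: vball_def mult_le_cancel_left_pos)
  moreover have "z = g * (z / g)" for z
    using \<open>g \<noteq> 0\<close> by simp
  ultimately show ?thesis
    by (metis (no_types, lifting) image_iff subsetI subset_antisym)
qed

lemma Q_power_int_powr: "(Q powi k) powr e = Q powr (k * e)"
  using Q_gt_1 by (simp add: powr_real_of_int'[symmetric] powr_powr)

lemma mem_vsphere_of_neq: "y \<noteq> x \<Longrightarrow> \<exists>j. y \<in> vsphere x j"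
  using av_power_int_value[of "y - x"] by (simp add: vsphere_def)

lemma av_on_vsphere:
  assumes x: "av x = Q powi n" and y: "y \<in> vsphere x j" and "j \<noteq> n"
  shows "av (x - y) = Q powi j" and "av y = Q powi max j n"
proof -
  have yx: "av (y - x) = Q powi j"
    using y by (simp add: vsphere_def)
  then show "av (x - y) = Q powi j"
    by (simp add: av_minus_commute)
  have "av ((y - x) + x) = max (av (y - x)) (av x)"
    using yx x \<open>j \<noteq> n\<close> by (intro av_add_eq_max) simp
  then show "av y = Q powi max j n"
    using yx x by (simp add: max_def)
qed

lemma vball_eq_or_disjoint: "vball c k = vball d k \<or> vball c k \<inter> vball d k = {}"
proof (rule disjCI)
  assume "vball c k \<inter> vball d k \<noteq> {}"
  then obtain w where "w \<in> vball c k" "w \<in> vball d k"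
    by blast
  then show "vball c k = vball d k"
    using vball_eq_of_mem by metis
qed

lemma UN_vball_scaled_int_ring:
  assumes g: "av g = Q powi k"
  shows "(\<Union>x\<in>int_ring av. vball (g * x) (k - 1)) = vball 0 k"
proof (intro equalityI subsetI)
  fix z assume "z \<in> (\<Union>x\<in>int_ring av. vball (g * x) (k - 1))"
  then obtain x where x: "av x \<le> 1" and z: "av (z - g * x) \<le> Q powi (k - 1)"
    unfolding vball_def int_ring_def by auto
  have "av (g * x) \<le> Q powi k"
    using x Q_power_int_pos[of k] by (simp add: av_mult g mult_le_cancel_left1)
  moreover have "Q powi (k - 1) \<le> Q powi k"
    by simp
  ultimately have "max (av (z - g * x)) (av (g * x)) \<le> Q powi k"
    using z by linarith
  then show "z \<in> vball 0 k"
    using order_trans[OF av_diff_le_max[of z 0 "g * x"]] by (simp add: vball_def)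
next
  fix z assume "z \<in> vball 0 k"
  have "g \<noteq> 0"
    using g Q_power_int_pos[of k] q_ge_2 by auto
  then have "z \<in> vball (g * (z / g)) (k - 1)"
    by simp
  moreover have "z / g \<in> int_ring av"
    using \<open>z \<in> vball 0 k\<close> Q_power_int_pos[of k] by (simp add: vball_def int_ring_def av_divide g)
  ultimately show "z \<in> (\<Union>x\<in>int_ring av. vball (g * x) (k - 1))"
    by blast
qed

lemma vball_partition:
  obtains C where "finite C" "card C = q" "disjoint C" "\<Union>C = vball 0 k"
    "\<And>S. S \<in> C \<Longrightarrow> \<exists>c. S = vball c (k - 1)"
proof -
  obtain g where g: "av g = Q powi k"
    using exists_av_eq by blast
  then have "g \<noteq> 0"
    using Q_power_int_pos[of k] q_ge_2 by auto
  define C where "C = (\<lambda>S. (*) g ` S) ` residue_classes av"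
  have classes: "residue_classes av = (\<lambda>x. vball x (- 1)) ` int_ring av"
    unfolding residue_classes_def by (rule image_cong[OF refl residue_class_eq_vball])
  have C_eq: "C = (\<lambda>x. vball (g * x) (k - 1)) ` int_ring av"
    unfolding C_def classes image_image image_mult_vball[OF g] by simp
  have "inj_on (\<lambda>S. (*) g ` S) (residue_classes av)"
    using \<open>g \<noteq> 0\<close> by (intro inj_onI) (auto simp: inj_image_eq_iff inj_on_def)
  then have "card C = q"
    unfolding C_def by (simp add: card_image card_residue_classes)
  moreover have "finite C"
    unfolding C_def using finite_residue_classes by simp
  moreover have "disjoint C"
    unfolding C_eq disjoint_def using vball_eq_or_disjoint by blast
  moreover have "\<Union>C = vball 0 k"
    unfolding C_eq by (rule UN_vball_scaled_int_ring[OF g])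
  moreover have "\<exists>c. S = vball c (k - 1)" if "S \<in> C" for S
    using that unfolding C_eq by blast
  ultimately show ?thesis
    using that by blast
qed
end

locale nonarch_haar = nonarch_valued_field av q for av :: "'a::field \<Rightarrow> real" and q +
  fixes M :: "'a measure"
  assumes haar: "haar_measure av M"
begin

lemma sets_M: "sets M = sigma_sets UNIV (closed_balls av)"
  and emeasure_translate: "A \<in> sets M \<Longrightarrow> emeasure M ((+) a ` A) = emeasure M A"
  and emeasure_int_ring: "emeasure M (int_ring av) = 1"
  using haar unfolding haar_measure_def by auto

lemma vball_in_sets: "vball a k \<in> sets M"
  unfolding sets_M vball_def closed_balls_def by (rule sigma_sets.Basic) blast

lemma singleton_in_sets: "{a} \<in> sets M"
proof -
  have "av (y - a) \<le> 0 \<longleftrightarrow> y = a" for y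
    using av_nonneg[of "y - a"] by (simp add: order_antisym_conv)
  then have "{a} = {y. av (y - a) \<le> 0}"
    by auto
  then show ?thesis
    unfolding sets_M closed_balls_def by (intro sigma_sets.Basic) blast
qed

lemma vsphere_in_sets: "vsphere a k \<in> sets M"
  unfolding vsphere_eq_Diff by (intro sets.Diff vball_in_sets)

lemma emeasure_vball_translate: "emeasure M (vball a k) = emeasure M (vball 0 k)"
  by (subst vball_translate) (rule emeasure_translate[OF vball_in_sets])

lemma emeasure_vball_0_step: "emeasure M (vball 0 k) = of_nat q * emeasure M (vball 0 (k - 1))"
proof -
  obtain C where C: "finite C" "card C = q" "disjoint C" "\<Union>C = vball 0 k"
    and balls: "\<And>S. S \<in> C \<Longrightarrow> \<exists>c. S = vball c (k - 1)"
    using vball_partition[of k] by blast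
  have "C \<subseteq> sets M"
    using balls vball_in_sets by blast
  then have "emeasure M (\<Union>S\<in>C. S) = (\<Sum>S\<in>C. emeasure M S)"
    using C(1,3) by (intro sum_emeasure[symmetric]) (auto simp: disjoint_family_on_def disjoint_def)
  then have "emeasure M (vball 0 k) = (\<Sum>S\<in>C. emeasure M S)"
    using C(4) by simp
  also have "\<dots> = (\<Sum>S\<in>C. emeasure M (vball 0 (k - 1)))"
    using balls emeasure_vball_translate by (intro sum.cong) auto
  finally show ?thesis
    using C(2) by simp
qed

lemma emeasure_vball: "emeasure M (vball a k) = ennreal (Q powi k)"
proof -
  have "emeasure M (vball 0 k) = ennreal (Q powi k)"
  proof (induction k rule: int_induct[where k = 0])
    case base
    show ?case
      using emeasure_int_ring by (simp add: vball_0_0)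
  next
    case (step1 i)
    then show ?case
      using emeasure_vball_0_step[of "i + 1"] Q_gt_1
      by (simp add: ennreal_of_nat_eq_real_of_nat power_int_add ennreal_mult' mult.commute)
  next
    case (step2 i)
    have "Q powi i = Q * Q powi (i - 1)"
      using Q_gt_1 by (simp add: power_int_diff)
    then have "of_nat q * emeasure M (vball 0 (i - 1)) = of_nat q * ennreal (Q powi (i - 1))"
      using emeasure_vball_0_step[of i] step2
      by (simp add: ennreal_of_nat_eq_real_of_nat ennreal_mult')
    then show ?case
      using q_ge_2 by (simp add: ennreal_mult_cancel_left)
  qed
  then show ?thesis
    using emeasure_vball_translate[of a k] by simp
qed

lemma measure_vsphere: "measure M (vsphere a k) = Q powi k * (1 - 1 / Q)"
  and emeasure_vsphere_finite: "emeasure M (vsphere a k) < \<infinity>"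
proof -
  have "emeasure M (vsphere a k) = emeasure M (vball a k) - emeasure M (vball a (k - 1))"
    unfolding vsphere_eq_Diff
    by (intro emeasure_Diff vball_in_sets vball_mono) (simp_all add: emeasure_vball)
  also have "\<dots> = ennreal (Q powi k * (1 - 1 / Q))"
    using Q_gt_1 by (simp add: emeasure_vball ennreal_minus power_int_diff field_simps)
  finally show "measure M (vsphere a k) = Q powi k * (1 - 1 / Q)"
    "emeasure M (vsphere a k) < \<infinity>"
    using Q_gt_1 by (simp_all add: measure_def)
qed

lemma emeasure_singleton: "emeasure M {a} = 0"
proof -
  have "emeasure M {a} \<le> ennreal ((1 / Q) ^ n)" for n
  proof -
    have "emeasure M {a} \<le> emeasure M (vball a (- int n))"
      by (intro emeasure_mono vball_in_sets) simp
    then show ?thesis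
      by (simp add: emeasure_vball power_int_minus power_one_over inverse_eq_divide)
  qed
  moreover have "(\<lambda>n. ennreal ((1 / Q) ^ n)) \<longlonglongrightarrow> 0"
    using Q_gt_1 by (intro tendsto_ennrealI[where x = 0, simplified] LIMSEQ_power_zero) simp
  ultimately have "emeasure M {a} \<le> 0"
    by (intro tendsto_le[OF _ _ tendsto_const, of sequentially]) (auto intro!: always_eventually)
  then show ?thesis
    by simp
qed

lemma integral_vsphere_constant:
  fixes f :: "'a \<Rightarrow> 'b::{banach, second_countable_topology}"
  assumes const: "\<And>j y. y \<in> vsphere x j \<Longrightarrow> f y = c j"
    and summable: "(\<lambda>j. norm (measure M (vsphere x j) *\<^sub>R c j)) summable_on UNIV"
  shows "integrable M f" and "((\<lambda>j. measure M (vsphere x j) *\<^sub>R c j) has_sum integral\<^sup>L M f) UNIV"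
proof -
  \<comment> \<open>The spheres around \<open>x\<close> cover everything except the null set \<open>{x}\<close>.\<close>
  define g where "g y = (if y = x then 0 else f y)" for y
  have center_notin: "x \<notin> vsphere x j" for j
    using Q_power_int_pos[of j] q_ge_2 by (simp add: vsphere_def)
  have disjoint: "i = j" if "y \<in> vsphere x i" "y \<in> vsphere x j" for i j y
    using that by (simp add: vsphere_def)
  have on_pieces: "g y = c j" if "y \<in> vsphere x j" for j y
    using that center_notin const by (auto simp: g_def)
  have off_pieces: "g y = 0" if "\<And>j. y \<notin> vsphere x j" for y
    using that mem_vsphere_of_neq by (auto simp: g_def)
  note piecewise = integrable_has_sum_integral_piecewise_constant[OF vsphere_in_sets emeasure_vsphere_finite
      disjoint on_pieces off_pieces summable]
  define z where "z = f x"
  have f_eq: "f = (\<lambda>y. g y + indicator {x} y *\<^sub>R z)"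
    by (simp add: g_def z_def fun_eq_iff indicator_def)
  have "{x} \<inter> space M = {x}"
    using sets.sets_into_space[OF singleton_in_sets] by blast
  then have point: "integrable M (\<lambda>y. indicator {x} y *\<^sub>R z)" "(\<integral>y. indicator {x} y *\<^sub>R z \<partial>M) = 0"
    using emeasure_singleton[of x]
    by (simp_all add: integrable_indicator_iff singleton_in_sets measure_def)
  show "integrable M f"
    unfolding f_eq by (intro Bochner_Integration.integrable_add piecewise(1) point(1))
  have "integral\<^sup>L M f = integral\<^sup>L M g"
    unfolding f_eq using piecewise(1) point by (simp add: Bochner_Integration.integral_add)
  then show "((\<lambda>j. measure M (vsphere x j) *\<^sub>R c j) has_sum integral\<^sup>L M f) UNIV"
    using piecewise(2) by simp
qed

lemma measure_vsphere_scaleR_radial: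
  "measure M (vsphere x j) *\<^sub>R (of_real ((Q powi max j n) powr (- \<alpha> - 1)) * (u (Q powi j) - u (Q powi n)))
    = radial_term Q \<alpha> u n j"
proof -
  consider "j < n" | "j = n" | "n < j"
    by linarith
  then show ?thesis
  proof cases
    case 1
    then have "max j n = n"
      by simp
    moreover have "real_of_int n * (- \<alpha> - 1) = - (\<alpha> + 1) * n"
      by (simp add: algebra_simps)
    ultimately have "(Q powi max j n) powr (- \<alpha> - 1) = Q powr (- (\<alpha> + 1) * n)"
      by (simp only: Q_power_int_powr)
    then show ?thesis
      using 1 by (simp add: measure_vsphere radial_term_def scaleR_conv_of_real mult_ac)
  next
    case 3
    have "measure M (vsphere x j) *\<^sub>R (of_real ((Q powi max j n) powr (- \<alpha> - 1)) * (u (Q powi j) - u (Q powi n)))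
        = of_real ((1 - 1 / Q) * (Q powi j * Q powr (j * (- \<alpha> - 1)))) * (u (Q powi j) - u (Q powi n))"
      using 3 by (simp add: measure_vsphere scaleR_conv_of_real Q_power_int_powr max_def mult_ac)
    also have "Q powi j * Q powr (j * (- \<alpha> - 1)) = Q powr (- \<alpha> * j)"
      using Q_gt_1 by (simp add: powr_real_of_int'[symmetric] flip: powr_add) (simp add: algebra_simps)
    finally show ?thesis
      using 3 by (simp add: radial_term_def mult_ac)
  qed (simp add: radial_term_def)
qed

lemma integral_radial_difference:
  fixes \<alpha> :: real and u :: "real \<Rightarrow> complex" and n :: int and x :: 'a
  defines "f \<equiv> \<lambda>y. complex_of_real (av y powr (- \<alpha> - 1)) * (u (av (x - y)) - u (av x))"
  assumes x: "av x = Q powi n"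
    and below: "(\<lambda>k. Q powi k * norm (u (Q powi k))) summable_on {..n - 1}"
    and above: "(\<lambda>l. Q powr (- \<alpha> * l) * norm (u (Q powi l))) summable_on {n + 1..}"
    and \<alpha>: "0 < \<alpha>"
  shows "integrable M f"
    and "integral\<^sup>L M f =
      of_real ((1 - 1 / Q) * Q powr (- (\<alpha> + 1) * n)) *
        ((\<Sum>\<^sub>\<infinity>k\<in>{..n - 1}. of_real (Q powi k) * u (Q powi k)) - of_real (Q powi n / (Q - 1)) * u (Q powi n))
      + of_real (1 - 1 / Q) *
        ((\<Sum>\<^sub>\<infinity>l\<in>{n + 1..}. of_real (Q powr (- \<alpha> * l)) * u (Q powi l))
          - of_real (Q powr (- \<alpha> * (n + 1)) / (1 - Q powr (- \<alpha>))) * u (Q powi n))"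
    (is "_ = ?sum")
proof -
  define c where "c j = of_real ((Q powi max j n) powr (- \<alpha> - 1)) * (u (Q powi j) - u (Q powi n))" for j
  have const: "f y = c j" if "y \<in> vsphere x j" for j y
  proof (cases "j = n")
    case True
    then show ?thesis
      using that x by (simp add: f_def c_def vsphere_def av_minus_commute)
  next
    case False
    then show ?thesis
      using av_on_vsphere[OF x that False] x by (simp add: f_def c_def Q_power_int_powr)
  qed
  have terms: "measure M (vsphere x j) *\<^sub>R c j = radial_term Q \<alpha> u n j" for j
    unfolding c_def by (rule measure_vsphere_scaleR_radial)
  note series = has_sum_radial_term[OF Q_gt_1 \<alpha> below above]
  have summable: "(\<lambda>j. norm (measure M (vsphere x j) *\<^sub>R c j)) summable_on UNIV"
    unfolding terms by (rule series(2))
  show "integrable M f"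
    using const summable by (rule integral_vsphere_constant(1))
  have "((\<lambda>j. measure M (vsphere x j) *\<^sub>R c j) has_sum integral\<^sup>L M f) UNIV"
    using const summable by (rule integral_vsphere_constant(2))
  then show "integral\<^sup>L M f = ?sum"
    unfolding terms using series(1) by (rule has_sum_unique)
qed

end

lemma middle_coefficient_identity:
  fixes Q \<alpha> :: real and n :: int
  assumes Q: "1 < Q" and \<alpha>: "0 < \<alpha>"
  shows "(1 - Q powr \<alpha>) / (1 - Q powr (- \<alpha> - 1)) *
      ((1 - 1 / Q) * Q powr (- (\<alpha> + 1) * n) * (Q powi n / (Q - 1))
       + (1 - 1 / Q) * (Q powr (- \<alpha> * (n + 1)) / (1 - Q powr (- \<alpha>))))
    = - (Q powr (- \<alpha> * n - 1) * (Q powr \<alpha> + Q - 2) / (1 - Q powr (- \<alpha> - 1)))"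
proof -
  define a where "a = Q powr (- \<alpha> * n)"
  define t where "t = Q powr \<alpha>"
  have t: "1 < t"
    unfolding t_def using Q \<alpha> by simp
  have "Q powr (- (\<alpha> + 1) * n) * Q powi n = a"
  proof -
    have "- (\<alpha> + 1) * n + n = - \<alpha> * n"
      by (simp add: algebra_simps)
    then show ?thesis
      using Q unfolding a_def by (simp add: powr_real_of_int'[symmetric] flip: powr_add)
  qed
  then have below: "(1 - 1 / Q) * Q powr (- (\<alpha> + 1) * n) * (Q powi n / (Q - 1)) = (1 - 1 / Q) * (a / (Q - 1))"
    by (simp add: mult.assoc)
  have exponent: "- \<alpha> * (n + 1) = - \<alpha> * n + - \<alpha>"
    by (simp add: algebra_simps)
  have above: "Q powr (- \<alpha> * (n + 1)) / (1 - Q powr (- \<alpha>)) = (a / t) / (1 - 1 / t)"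
    unfolding a_def t_def exponent by (simp only: powr_add powr_minus divide_inverse mult_1_left)
  have shifted: "Q powr (- \<alpha> - 1) = 1 / (t * Q)" "Q powr (- \<alpha> * n - 1) = a / Q"
    unfolding a_def t_def using Q by (simp_all add: powr_diff powr_minus divide_inverse)
  have nonzero: "Q \<noteq> 0" "Q - 1 \<noteq> 0" "t \<noteq> 0" "t - 1 \<noteq> 0" "t * Q - 1 \<noteq> 0"
    using Q t by (auto simp: algebra_simps dest: less_1_mult[of t Q])
  have "(1 - 1 / Q) * (a / (Q - 1)) = a / Q" "(1 - 1 / Q) * (a / t / (1 - 1 / t)) = a * (Q - 1) / (Q * (t - 1))"
    using nonzero by (simp_all add: field_simps)
  moreover have "a / Q + a * (Q - 1) / (Q * (t - 1)) = a * (t + Q - 2) / (Q * (t - 1))"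
    using nonzero by (simp add: field_simps)
  ultimately have bracket: "(1 - 1 / Q) * (a / (Q - 1)) + (1 - 1 / Q) * (a / t / (1 - 1 / t))
      = a * (t + Q - 2) / (Q * (t - 1))"
    by simp
  have "(1 - t) * (a * (t + Q - 2) / (Q * (t - 1))) = - (a / Q * (t + Q - 2))"
    using nonzero by (simp add: field_simps)
  then show ?thesis
    unfolding below above shifted t_def[symmetric] bracket
    by (simp only: times_divide_eq_left minus_divide_left)
qed

lemma scaled_two_part_sum:
  fixes d K r G1 G2 :: real and S1 S2 U :: complex
  shows "of_real d * (of_real K * (S1 - of_real G1 * U) + of_real r * (S2 - of_real G2 * U))
    = of_real (d * K) * S1 + of_real (- (d * (K * G1 + r * G2))) * U + of_real (d * r) * S2"
  by (simp add: algebra_simps)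

theorem lemma1:
  fixes av :: "'a::field \<Rightarrow> real" and q :: nat and M :: "'a measure"
    and \<alpha> :: real and u :: "real \<Rightarrow> complex" and m :: int
  assumes K: "nonarch_local_field av q"
    and Haar: "haar_measure av M"
    and \<alpha>: "\<alpha> > 0"
    and sum1: "(\<lambda>k::int. real q powi k * norm (u (real q powi k))) summable_on {..m}"
    and sum2: "(\<lambda>l::int. real q powr (-\<alpha> * l) * norm (u (real q powi l))) summable_on {m..}"
  shows "\<forall>(n::int) (x::'a). av x = real q powi n \<longrightarrow>
     (let d = (1 - real q powr \<alpha>) / (1 - real q powr (-\<alpha> - 1));
          f = (\<lambda>y. complex_of_real (av y powr (-\<alpha> - 1)) * (u (av (x - y)) - u (av x)))
      in integrable M f \<and>
         complex_of_real d * integral\<^sup>L M f =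
           complex_of_real (d * (1 - 1 / real q) * real q powr (-(\<alpha> + 1) * n)) *
              (\<Sum>\<^sub>\<infinity>k\<in>{..n-1}. complex_of_real (real q powi k) * u (real q powi k))
         + complex_of_real (real q powr (-\<alpha> * n - 1) * (real q powr \<alpha> + real q - 2)
                              / (1 - real q powr (-\<alpha> - 1))) * u (real q powi n)
         + complex_of_real (d * (1 - 1 / real q)) *
              (\<Sum>\<^sub>\<infinity>l\<in>{n+1..}. complex_of_real (real q powr (-\<alpha> * l)) * u (real q powi l)))"
proof (intro allI impI)
  interpret nonarch_haar av q M
    by (intro nonarch_haar.intro nonarch_valued_field.intro nonarch_haar_axioms.intro K Haar)
  fix n :: int and x :: 'a
  assume x: "av x = Q powi n"
  define d where "d = (1 - Q powr \<alpha>) / (1 - Q powr (- \<alpha> - 1))"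
  define f where "f = (\<lambda>y. complex_of_real (av y powr (- \<alpha> - 1)) * (u (av (x - y)) - u (av x)))"
  note radial = integral_radial_difference[OF x summable_on_atMost_int_shift[OF sum1]
      summable_on_atLeast_int_shift[OF sum2] \<alpha>, folded f_def]
  have "complex_of_real d * integral\<^sup>L M f =
           complex_of_real (d * (1 - 1 / Q) * Q powr (-(\<alpha> + 1) * n)) *
              (\<Sum>\<^sub>\<infinity>k\<in>{..n-1}. complex_of_real (Q powi k) * u (Q powi k))
         + complex_of_real (Q powr (-\<alpha> * n - 1) * (Q powr \<alpha> + Q - 2)
                              / (1 - Q powr (-\<alpha> - 1))) * u (Q powi n)
         + complex_of_real (d * (1 - 1 / Q)) *
              (\<Sum>\<^sub>\<infinity>l\<in>{n+1..}. complex_of_real (Q powr (-\<alpha> * l)) * u (Q powi l))"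
    unfolding radial(2) scaled_two_part_sum d_def middle_coefficient_identity[OF Q_gt_1 \<alpha>] minus_minus
    by (simp only: mult.assoc)
  then show "let d = (1 - Q powr \<alpha>) / (1 - Q powr (- \<alpha> - 1));
          f = (\<lambda>y. complex_of_real (av y powr (- \<alpha> - 1)) * (u (av (x - y)) - u (av x)))
      in integrable M f \<and>
         complex_of_real d * integral\<^sup>L M f =
           complex_of_real (d * (1 - 1 / Q) * Q powr (-(\<alpha> + 1) * n)) *
              (\<Sum>\<^sub>\<infinity>k\<in>{..n-1}. complex_of_real (Q powi k) * u (Q powi k))
         + complex_of_real (Q powr (-\<alpha> * n - 1) * (Q powr \<alpha> + Q - 2)
                              / (1 - Q powr (-\<alpha> - 1))) * u (Q powi n)
         + complex_of_real (d * (1 - 1 / Q)) *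
              (\<Sum>\<^sub>\<infinity>l\<in>{n+1..}. complex_of_real (Q powr (-\<alpha> * l)) * u (Q powi l))"
    unfolding Let_def d_def[symmetric] f_def[symmetric] using radial(1) by simp
qed

end
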